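(* Assume that $\mathfrak{c} = 2^{<\mathfrak{c}}$ and that $\mathfrak{c}$ is a regular cardinal, where $\mathfrak{c}=|\mathbb{R}|$. Then there are $2^{2^{\mathfrak{c}}}$ many pairwise distinct $\sigma$-algebras on $\mathbb{R}$ each of which contains $[\mathbb{R}]^{\leq\omega}$.
   Context: $[\mathbb{R}]^{\leq\omega}$ denotes the family of all countable (finite or countably infinite) subsets of $\mathbb{R}$. $2^{<\mathfrak{c}} = \sup\{2^\lambda : \lambda<\mathfrak{c}\ \text{a cardinal}\}$. *)

theory Defs
  imports "HOL-Analysis.Analysis"
begin

text \<open>The assumption c = 2^(<c): every cardinal lambda < c satisfies
  2^lambda <= c. Cardinals below c are represented by subsets of the reals.
  (The inequality c <= 2^(<c) holds in ZFC anyway.)\<close>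
definition continuum_eq_two_lt_continuum :: bool where
  "continuum_eq_two_lt_continuum \<longleftrightarrow>
     (\<forall>A :: real set. ordLess2 (card_of A) (card_of (UNIV :: real set))
        \<longrightarrow> ordLeq3 (card_of (Pow A)) (card_of (UNIV :: real set)))"

end

theory Submission
  imports Defs
begin

text \<open>Well-order \<open>\<real>\<close> in order type \<open>\<mathfrak>c\<close>. Under \<open>\<mathfrak>c = 2\<^bsup><\<mathfrak>c\<^esup>\<close> there are only \<open>\<mathfrak>c\<close> pairs
  \<open>(a, X)\<close> with \<open>X\<close> a subset of the initial segment below \<open>a\<close>, so they can be coded injectively
  by reals; the branch of \<open>\<beta> \<subseteq> \<real>\<close> is the set of codes of the pairs \<open>(a, \<beta> \<inter> below a)\<close>.
  Given a countable set \<open>C\<close> and countably many sets \<open>X \<noteq> \<beta>\<close>, regularity of \<open>\<mathfrak>c\<close> yields a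
  point \<open>a\<close> above a point of each \<open>X \<triangle> \<beta>\<close> and above the first coordinate of every code in \<open>C\<close>;
  the code of \<open>(a, \<beta> \<inter> below a)\<close> then lies on the branch of \<open>\<beta>\<close>, but neither in \<open>C\<close> nor on the
  branch of any \<open>X\<close>. Hence, for a family \<open>S\<close> of subsets of \<open>\<real>\<close>, the \<open>\<sigma>\<close>-ideal generated
  by the singletons and the branches of the members of \<open>S\<close> contains the branch of \<open>\<beta>\<close> iff
  \<open>\<beta> \<in> S\<close> and never the complement of a branch, so the \<open>\<sigma>\<close>-algebra of its small and co-small
  sets determines \<open>S\<close>.\<close>

unbundle cardinal_syntax

definition ideal_or_coideal :: "'a set set \<Rightarrow> 'a set set" where
  "ideal_or_coideal I = {A. A \<in> I \<or> - A \<in> I}"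

lemma sigma_algebra_ideal_or_coideal:
  assumes empty: "{} \<in> I"
    and subset: "\<And>A B. A \<in> I \<Longrightarrow> B \<subseteq> A \<Longrightarrow> B \<in> I"
    and UN: "\<And>A :: nat \<Rightarrow> 'a set. (\<And>i. A i \<in> I) \<Longrightarrow> (\<Union>i. A i) \<in> I"
  shows "sigma_algebra UNIV (ideal_or_coideal I)"
  unfolding sigma_algebra_iff2
proof (intro conjI allI impI ballI)
  show "ideal_or_coideal I \<subseteq> Pow UNIV" by blast
  show "{} \<in> ideal_or_coideal I" using empty unfolding ideal_or_coideal_def by simp
  show "UNIV - A \<in> ideal_or_coideal I" if "A \<in> ideal_or_coideal I" for A
    using that unfolding ideal_or_coideal_def Compl_eq_Diff_UNIV[symmetric] by auto
  fix A :: "nat \<Rightarrow> 'a set"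
  assume A: "range A \<subseteq> ideal_or_coideal I"
  show "(\<Union>i. A i) \<in> ideal_or_coideal I"
  proof (cases "\<exists>i. - A i \<in> I")
    case True
    then obtain i where "- A i \<in> I" by blast
    then have "- (\<Union>i. A i) \<in> I" by (rule subset) blast
    then show ?thesis unfolding ideal_or_coideal_def by blast
  next
    case False
    with A have "A i \<in> I" for i unfolding ideal_or_coideal_def by blast
    then show ?thesis unfolding ideal_or_coideal_def by (blast intro: UN)
  qed
qed

definition countable_cover_ideal :: "('i \<Rightarrow> 'a set) \<Rightarrow> 'i set \<Rightarrow> 'a set set" where
  "countable_cover_ideal B S =
     {A. \<exists>C K. countable C \<and> countable K \<and> K \<subseteq> S \<and> A \<subseteq> C \<union> \<Union>(B ` K)}"

lemma countable_in_countable_cover_ideal: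
  "countable A \<Longrightarrow> A \<in> countable_cover_ideal B S"
  unfolding countable_cover_ideal_def by (intro CollectI exI[of _ A] exI[of _ "{}"]) simp

lemma countable_cover_ideal_subset:
  assumes "A \<in> countable_cover_ideal B S" and "A' \<subseteq> A"
  shows "A' \<in> countable_cover_ideal B S"
proof -
  from assms(1) obtain C K where "countable C" "countable K" "K \<subseteq> S" "A \<subseteq> C \<union> \<Union>(B ` K)"
    unfolding countable_cover_ideal_def by blast
  with assms(2) show ?thesis
    unfolding countable_cover_ideal_def by (intro CollectI exI[of _ C] exI[of _ K]) auto
qed

lemma countable_cover_ideal_UN:
  assumes "\<And>i :: nat. A i \<in> countable_cover_ideal B S"
  shows "(\<Union>i. A i) \<in> countable_cover_ideal B S"
proof -
  have "\<forall>i. \<exists>C K. countable C \<and> countable K \<and> K \<subseteq> S \<and> A i \<subseteq> C \<union> \<Union>(B ` K)"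
    using assms unfolding countable_cover_ideal_def by blast
  then obtain C K where CK: "\<And>i. countable (C i) \<and> countable (K i) \<and> K i \<subseteq> S \<and>
    A i \<subseteq> C i \<union> \<Union>(B ` K i)"
    by metis
  have "countable (\<Union>i. C i)" "countable (\<Union>i. K i)" "(\<Union>i. K i) \<subseteq> S"
    using CK by auto
  moreover have "(\<Union>i. A i) \<subseteq> (\<Union>i. C i) \<union> \<Union>(B ` (\<Union>i. K i))"
    using CK by fastforce
  ultimately show ?thesis
    unfolding countable_cover_ideal_def
    by (intro CollectI exI[of _ "\<Union>i. C i"] exI[of _ "\<Union>i. K i"] conjI)
qed

lemma sigma_algebra_countable_cover:
  "sigma_algebra UNIV (ideal_or_coideal (countable_cover_ideal B S))"
  by (rule sigma_algebra_ideal_or_coideal[OF countable_in_countable_cover_ideal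
        countable_cover_ideal_subset countable_cover_ideal_UN]) simp_all

lemma countable_in_ideal_or_coideal_countable_cover:
  "countable A \<Longrightarrow> A \<in> ideal_or_coideal (countable_cover_ideal B S)"
  unfolding ideal_or_coideal_def by (simp add: countable_in_countable_cover_ideal)

context
  fixes B :: "'i \<Rightarrow> 'a set"
  assumes independent:
    "\<And>\<beta> C K. countable C \<Longrightarrow> countable K \<Longrightarrow> \<beta> \<notin> K \<Longrightarrow> \<not> B \<beta> \<subseteq> C \<union> \<Union>(B ` K)"
begin

lemma in_countable_cover_ideal_iff: "B \<beta> \<in> countable_cover_ideal B S \<longleftrightarrow> \<beta> \<in> S"
proof
  assume "B \<beta> \<in> countable_cover_ideal B S"
  then obtain C K where "countable C" "countable K" "K \<subseteq> S" "B \<beta> \<subseteq> C \<union> \<Union>(B ` K)"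
    unfolding countable_cover_ideal_def by blast
  with independent show "\<beta> \<in> S" by blast
next
  assume "\<beta> \<in> S"
  then show "B \<beta> \<in> countable_cover_ideal B S"
    unfolding countable_cover_ideal_def by (intro CollectI exI[of _ "{}"] exI[of _ "{\<beta>}"]) auto
qed

lemma Compl_notin_countable_cover_ideal:
  assumes "uncountable (UNIV :: 'i set)"
  shows "- B \<beta> \<notin> countable_cover_ideal B S"
proof
  assume "- B \<beta> \<in> countable_cover_ideal B S"
  then obtain C K where C: "countable C" and K: "countable K"
    and cover: "- B \<beta> \<subseteq> C \<union> \<Union>(B ` K)"
    unfolding countable_cover_ideal_def by blast
  have "insert \<beta> K \<noteq> UNIV" using K assms by (metis countable_insert)
  then obtain \<gamma> where "\<gamma> \<notin> insert \<beta> K" by blast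
  moreover have "B \<gamma> \<subseteq> C \<union> \<Union>(B ` insert \<beta> K)" using cover by blast
  ultimately show False using independent C K by blast
qed

lemma inj_ideal_or_coideal_countable_cover:
  assumes "uncountable (UNIV :: 'i set)"
  shows "inj (\<lambda>S. ideal_or_coideal (countable_cover_ideal B S))"
proof (rule injI)
  fix S T assume eq: "ideal_or_coideal (countable_cover_ideal B S) =
    ideal_or_coideal (countable_cover_ideal B T)"
  have "S = {\<beta>. B \<beta> \<in> ideal_or_coideal (countable_cover_ideal B S)}" for S
    unfolding ideal_or_coideal_def
    by (simp add: in_countable_cover_ideal_iff Compl_notin_countable_cover_ideal[OF assms])
  with eq show "S = T" by metis
qed

end

definition branch :: "('a \<times> 'a set \<Rightarrow> 'b) \<Rightarrow> 'a rel \<Rightarrow> 'a set \<Rightarrow> 'b set" where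
  "branch g r \<beta> = range (\<lambda>a. g (a, \<beta> \<inter> underS r a))"

lemma branch_not_covered:
  assumes bounded: "\<And>E. countable E \<Longrightarrow> \<exists>a. E \<subseteq> underS r a"
    and g: "inj_on g (SIGMA a : UNIV. Pow (underS r a))"
    and C: "countable C" and K: "countable K" and \<beta>: "\<beta> \<notin> K"
  shows "\<not> branch g r \<beta> \<subseteq> C \<union> \<Union>(branch g r ` K)"
proof
  assume cover: "branch g r \<beta> \<subseteq> C \<union> \<Union>(branch g r ` K)"
  have "\<forall>X\<in>K. \<exists>x. x \<in> (X - \<beta>) \<union> (\<beta> - X)"
    using \<beta> by (metis DiffI UnCI subsetI subset_antisym)
  then obtain d where d: "\<And>X. X \<in> K \<Longrightarrow> d X \<in> (X - \<beta>) \<union> (\<beta> - X)"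
    by metis
  define Q where "Q = fst ` ((SIGMA a : UNIV. Pow (underS r a)) \<inter> g -` C)"
  have "countable Q"
    unfolding Q_def using countable_image_inj_Int_vimage[OF g C] by blast
  with K obtain a where a: "d ` K \<subseteq> underS r a" "Q \<subseteq> underS r a"
    using bounded[of "d ` K \<union> Q"] by auto
  let ?node = "(a, \<beta> \<inter> underS r a)"
  have "g ?node \<notin> C"
  proof
    assume "g ?node \<in> C"
    then have "?node \<in> (SIGMA a : UNIV. Pow (underS r a)) \<inter> g -` C" by auto
    then have "a \<in> Q" unfolding Q_def by (metis fst_conv image_eqI)
    with a(2) show False by (auto simp: underS_def)
  qed
  moreover have "g ?node \<notin> branch g r X" if X: "X \<in> K" for X
  proof
    assume "g ?node \<in> branch g r X"
    then obtain a' where "g ?node = g (a', X \<inter> underS r a')"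
      unfolding branch_def by blast
    with g have "?node = (a', X \<inter> underS r a')"
      by (rule inj_onD) auto
    then have "\<beta> \<inter> underS r a = X \<inter> underS r a" by auto
    moreover have "d X \<in> underS r a" using a(1) X by blast
    ultimately show False using d[OF X] by blast
  qed
  moreover have "g ?node \<in> branch g r \<beta>" unfolding branch_def by blast
  ultimately show False using cover by blast
qed

lemma regularCard_countable_bounded:
  assumes r: "Card_order r" "regularCard r" and uncountable: "uncountable (Field r)"
    and E: "countable E" "E \<subseteq> Field r"
  shows "\<exists>a \<in> Field r. E \<subseteq> underS r a"
proof (rule regularCard_UNION[OF r])
  have "Well_order r" using r(1) by (rule card_order_on_well_order_on)
  then have "trans r" "antisym r" by (simp_all add: order_on_defs)
  then show "relChain r (underS r)" by (simp add: relChain_def underS_incr)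
  have "infinite (Field r)" using uncountable countable_finite by blast
  with r(1) show "E \<subseteq> (\<Union>a \<in> Field r. underS r a)"
    using E(2) infinite_Card_order_limit unfolding underS_def by fastforce
  have "\<not> |Field r| \<le>o |E|"
    using uncountable E(1) countable_image_inj_on countable_subset
    unfolding card_of_ordLeq[symmetric] by metis
  then have "|E| <o |Field r|"
    by (simp add: not_ordLeq_iff_ordLess[OF card_of_Well_order card_of_Well_order])
  then show "|E| <o r" using card_of_Field_ordIso[OF r(1)] by (rule ordLess_ordIso_trans)
qed

abbreviation continuum :: "real rel" where
  "continuum \<equiv> |UNIV :: real set|"

lemma card_of_Sigma_Pow_underS_continuum:
  assumes "continuum_eq_two_lt_continuum"
  shows "|SIGMA a : UNIV. Pow (underS continuum a)| \<le>o continuum"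
proof (rule card_of_Sigma_ordLeq_infinite_Field)
  show "infinite (Field continuum)"
    using uncountable_UNIV_real countable_finite by (auto simp: Field_card_of)
  show "\<forall>a \<in> UNIV. |Pow (underS continuum a)| \<le>o continuum"
    using assms card_of_underS[OF card_of_Card_order, of _ "UNIV :: real set"]
    unfolding continuum_eq_two_lt_continuum_def by (simp add: Field_card_of)
qed (simp_all add: card_of_Card_order ordLeq_refl)

theorem theorem3p10:
  assumes "continuum_eq_two_lt_continuum"
    and "regularCard (card_of (UNIV :: real set))"
  shows "\<exists>F. F \<subseteq> {M. sigma_algebra (UNIV :: real set) M \<and> {A. countable A} \<subseteq> M}
           \<and> ordIso2 (card_of F) (card_of (Pow (Pow (UNIV :: real set))))"
proof -
  have "|SIGMA a : UNIV. Pow (underS continuum a)| \<le>o |UNIV :: real set|"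
    using assms(1) by (rule card_of_Sigma_Pow_underS_continuum)
  then obtain g :: "real \<times> real set \<Rightarrow> real"
    where g: "inj_on g (SIGMA a : UNIV. Pow (underS continuum a))"
    unfolding card_of_ordLeq[symmetric] by blast
  have bounded: "\<exists>a. E \<subseteq> underS continuum a" if "countable E" for E :: "real set"
    using regularCard_countable_bounded[OF card_of_Card_order assms(2)] uncountable_UNIV_real that
    by (simp add: Field_card_of)
  define M where "M S = ideal_or_coideal (countable_cover_ideal (branch g continuum) S)" for S
  have "range M \<subseteq> {M. sigma_algebra UNIV M \<and> {A. countable A} \<subseteq> M}"
    unfolding M_def
    by (auto simp: sigma_algebra_countable_cover countable_in_ideal_or_coideal_countable_cover)
  moreover have "inj M"
    unfolding M_def using branch_not_covered[OF bounded g] uncountable_UNIV_real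
    by (intro inj_ideal_or_coideal_countable_cover) (auto dest: countable_image_inj[OF _ inj_singleton])
  then have "|UNIV :: real set set set| =o |range M|"
    unfolding card_of_ordIso[symmetric] by (blast intro: inj_on_imp_bij_betw)
  then have "|range M| =o |Pow (Pow (UNIV :: real set))|"
    by (simp add: ordIso_symmetric)
  ultimately show ?thesis by blast
qed

end
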